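(* Let $q \ge 2$ and $n$ be integers, let $k \le \lfloor n/2\rfloor - 1$ be a nonnegative integer, and set $u = \lfloor n/2\rfloor + 1$ and $v = n-k$. If $u < v$ and $$\frac{\binom{n-k-1}{n-v}}{\binom{n-k-1}{n-u}} > \frac{(q^{2v-n}-1)\binom{n}{v}}{(q^{2u-n}-1)\binom{n}{u}},$$ then $k$-uniform states in $(\mathbb{C}^q)^{\otimes n}$ do not exist.
   Context: A pure state $|\psi\rangle \in (\mathbb{C}^q)^{\otimes n}$ is called $k$-uniform if, with $\rho = |\psi\rangle\langle\psi|$, for every subset $S \subseteq \{1,\dots,n\}$ with $|S| = k$ the reduced state of $\rho$ on the parties in $S$ equals $I/q^k$, where $I$ is the identity on $(\mathbb{C}^q)^{\otimes k}$. *)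

theory Defs
  imports Complex_Main "HOL-Library.FuncSet"
begin

text \<open>Computational basis of (C^q)^{\<otimes>n}: index tuples i : {0..<n} \<rightarrow> {0..<q}
  (extensional functions).\<close>

definition tuples :: "nat set \<Rightarrow> nat \<Rightarrow> (nat \<Rightarrow> nat) set" where
  "tuples S q = S \<rightarrow>\<^sub>E {0..<q}"

definition is_pure_state :: "nat \<Rightarrow> nat \<Rightarrow> ((nat \<Rightarrow> nat) \<Rightarrow> complex) \<Rightarrow> bool" where
  "is_pure_state n q psi \<longleftrightarrow>
     (\<forall>i. i \<notin> tuples {0..<n} q \<longrightarrow> psi i = 0) \<and>
     (\<Sum>i\<in>tuples {0..<n} q. (cmod (psi i))\<^sup>2) = 1"

text \<open>Matrix entry (a,b) of the reduced state of |psi><psi| on the parties in S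
  (partial trace over the complement {0..<n} - S); a, b range over tuples S q.\<close>
definition reduced_state ::
  "nat \<Rightarrow> nat \<Rightarrow> ((nat \<Rightarrow> nat) \<Rightarrow> complex) \<Rightarrow> nat set \<Rightarrow> (nat \<Rightarrow> nat) \<Rightarrow> (nat \<Rightarrow> nat) \<Rightarrow> complex" where
  "reduced_state n q psi S a b =
     (\<Sum>c\<in>tuples ({0..<n} - S) q.
        psi (\<lambda>j. if j \<in> S then a j else c j) * cnj (psi (\<lambda>j. if j \<in> S then b j else c j)))"

definition k_uniform :: "nat \<Rightarrow> nat \<Rightarrow> nat \<Rightarrow> ((nat \<Rightarrow> nat) \<Rightarrow> complex) \<Rightarrow> bool" where
  "k_uniform n q k psi \<longleftrightarrow> is_pure_state n q psi \<and>
     (\<forall>S. S \<subseteq> {0..<n} \<and> card S = k \<longrightarrow>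
        (\<forall>a\<in>tuples S q. \<forall>b\<in>tuples S q.
           reduced_state n q psi S a b = (if a = b then 1 / of_nat (q ^ k) else 0)))"

end

theory Submission
  imports Defs "HOL-Analysis.Convex"
begin

text \<open>Following Rains, let \<open>A'\<^sub>S = q\<^bsup>|S|\<^esup> tr \<rho>\<^sub>S\<^sup>2\<close> and let \<open>A\<^sub>R\<close> be its Moebius transform
  over the subsets of the parties. Up to the factor \<open>q\<^sup>n\<close>, \<open>A\<^sub>R\<close> is the squared
  Hilbert-Schmidt norm of what is left of \<open>\<rho>\<close> after depolarizing the parties outside \<open>R\<close> and
  applying \<open>id - depolarize {i}\<close> for every \<open>i \<in> R\<close>; in particular \<open>A\<^sub>R \<ge> 0\<close>.
  For a \<open>k\<close>-uniform state \<open>A'\<^sub>S = 1\<close> whenever \<open>|S| \<le> k\<close>, so \<open>A\<^sub>\<emptyset> = 1\<close> and \<open>A\<^sub>R = 0\<close> for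
  \<open>0 < |R| \<le> k\<close>. Since \<open>\<psi>\<close> is pure, \<open>\<rho>\<^sub>S\<close> and its complement have the same purity; this
  gives \<open>A'\<^sub>S = q\<^bsup>2|S|-n\<^esup>\<close> for \<open>|S| = n - k\<close> and, with Cauchy-Schwarz, \<open>A'\<^sub>S \<ge> q\<^bsup>2|S|-n\<^esup>\<close>
  for \<open>|S| \<ge> n/2\<close>. Summing \<open>A'\<^sub>S - 1 = \<Sum>{A\<^sub>R | R \<subseteq> S, |R| > k}\<close> over all \<open>S\<close> of size
  \<open>u\<close>, resp. \<open>v\<close>, weights each \<open>A\<^sub>R\<close> by a number of supersets, and comparing the weights
  contradicts the hypothesis on the binomial ratio.\<close>

lemma finite_tuples [simp]: "finite A \<Longrightarrow> finite (tuples A q)"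
  unfolding tuples_def by (simp add: finite_PiE)

lemma card_tuples: "finite A \<Longrightarrow> card (tuples A q) = q ^ card A"
  unfolding tuples_def by (simp add: card_PiE)

lemma override_on_in_tuples:
  "x \<in> tuples B q \<Longrightarrow> c \<in> tuples A q \<Longrightarrow> override_on x c A \<in> tuples (B \<union> A) q"
  unfolding tuples_def PiE_iff extensional_def override_on_def by auto

lemma override_on_override_on [simp]: "override_on (override_on x c A) d A = override_on x d A"
  by (simp add: override_on_def fun_eq_iff)

lemma tuples_eq_iff:
  assumes "c \<in> tuples A q" "e \<in> tuples A q"
  shows "(\<forall>j\<in>A. c j = e j) \<longleftrightarrow> c = e"
  using assms unfolding tuples_def PiE_iff extensional_def by (auto simp: fun_eq_iff)

lemma override_on_Diff_tuples:
  assumes "a \<in> tuples S q" "c \<in> tuples (D - S) q"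
  shows "override_on a c (D - S) = (\<lambda>j. if j \<in> S then a j else c j)"
  using assms unfolding tuples_def PiE_iff extensional_def override_on_def by (auto simp: fun_eq_iff)

lemma sum_tuples_split:
  assumes "A \<subseteq> D"
  shows "(\<Sum>x\<in>tuples D q. f x) = (\<Sum>a\<in>tuples (D - A) q. \<Sum>c\<in>tuples A q. f (override_on a c A))"
proof -
  have "(\<Sum>a\<in>tuples (D - A) q. \<Sum>c\<in>tuples A q. f (override_on a c A))
      = (\<Sum>(a, c)\<in>tuples (D - A) q \<times> tuples A q. f (override_on a c A))"
    by (rule sum.cartesian_product)
  also have "\<dots> = (\<Sum>x\<in>tuples D q. f x)"
  proof (rule sum.reindex_bij_witness[where i = "\<lambda>x. (restrict x (D - A), restrict x A)"
        and j = "\<lambda>(a, c). override_on a c A"])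
    fix p assume "p \<in> tuples (D - A) q \<times> tuples A q"
    then show "(restrict ((\<lambda>(a, c). override_on a c A) p) (D - A),
                restrict ((\<lambda>(a, c). override_on a c A) p) A) = p"
      and "(\<lambda>(a, c). override_on a c A) p \<in> tuples D q"
      using assms by (cases p, auto simp: tuples_def PiE_iff extensional_def override_on_def
          fun_eq_iff restrict_def)+
  next
    fix x assume "x \<in> tuples D q"
    then show "(\<lambda>(a, c). override_on a c A) (restrict x (D - A), restrict x A) = x"
      and "(restrict x (D - A), restrict x A) \<in> tuples (D - A) q \<times> tuples A q"
      using assms unfolding tuples_def PiE_iff extensional_def override_on_def
      by (auto simp: fun_eq_iff)
  qed auto
  finally show ?thesis ..
qed

type_synonym matrix = "(nat \<Rightarrow> nat) \<Rightarrow> (nat \<Rightarrow> nat) \<Rightarrow> complex"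

definition partial_trace :: "nat \<Rightarrow> nat set \<Rightarrow> matrix \<Rightarrow> matrix" where
  "partial_trace q A X x y = (\<Sum>c\<in>tuples A q. X (override_on x c A) (override_on y c A))"

text \<open>The completely depolarizing channel on the parties in \<open>A\<close>,
  \<open>X \<mapsto> tr\<^sub>A X \<otimes> I\<^sub>A / q\<^bsup>|A|\<^esup>\<close>.\<close>
definition depolarize :: "nat \<Rightarrow> nat set \<Rightarrow> matrix \<Rightarrow> matrix" where
  "depolarize q A X x y =
     (if \<forall>j\<in>A. x j = y j then partial_trace q A X x y / of_nat q ^ card A else 0)"

lemma partial_trace_override_on [simp]:
  "partial_trace q A X (override_on x c A) (override_on y e A) = partial_trace q A X x y"
  by (simp add: partial_trace_def)

lemma partial_trace_depolarize [simp]: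
  assumes "finite A" "q > 0"
  shows "partial_trace q A (depolarize q A X) = partial_trace q A X"
  using assms by (simp add: fun_eq_iff partial_trace_def[of q A "depolarize q A X"]
      depolarize_def card_tuples)

lemma depolarize_idem [simp]:
  "finite A \<Longrightarrow> q > 0 \<Longrightarrow> depolarize q A (depolarize q A X) = depolarize q A X"
  by (simp add: fun_eq_iff depolarize_def[of q A "depolarize q A X"] depolarize_def[of q A X])

lemma depolarize_diff:
  "depolarize q A (\<lambda>x y. X x y - Y x y) = (\<lambda>x y. depolarize q A X x y - depolarize q A Y x y)"
  by (auto simp: depolarize_def partial_trace_def fun_eq_iff sum_subtractf diff_divide_distrib)

lemma partial_trace_Un:
  assumes "A \<inter> B = {}"
  shows "partial_trace q (A \<union> B) X = partial_trace q A (partial_trace q B X)"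
proof (intro ext)
  fix x y :: "nat \<Rightarrow> nat"
  have override: "override_on x (override_on c d B) (A \<union> B) = override_on (override_on x c A) d B"
    for x c d by (auto simp: override_on_def fun_eq_iff)
  have "partial_trace q (A \<union> B) X x y = (\<Sum>c\<in>tuples (A \<union> B - B) q. \<Sum>d\<in>tuples B q.
      X (override_on x (override_on c d B) (A \<union> B)) (override_on y (override_on c d B) (A \<union> B)))"
    unfolding partial_trace_def by (rule sum_tuples_split) auto
  also have "A \<union> B - B = A" using assms by auto
  finally show "partial_trace q (A \<union> B) X x y = partial_trace q A (partial_trace q B X) x y"
    by (simp add: override partial_trace_def)
qed

lemma depolarize_depolarize:
  assumes "finite A" "finite B" "A \<inter> B = {}"
  shows "depolarize q A (depolarize q B X) = depolarize q (A \<union> B) X"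
proof (intro ext)
  fix x y :: "nat \<Rightarrow> nat"
  have agree_B: "(\<forall>j\<in>B. override_on x c A j = override_on y c A j) \<longleftrightarrow> (\<forall>j\<in>B. x j = y j)"
    for c using assms(3) by (auto simp: override_on_def)
  show "depolarize q A (depolarize q B X) x y = depolarize q (A \<union> B) X x y"
  proof (cases "(\<forall>j\<in>A. x j = y j) \<and> (\<forall>j\<in>B. x j = y j)")
    case True
    then show ?thesis
      using assms by (simp add: depolarize_def agree_B ball_Un partial_trace_def[of q A] partial_trace_Un
          card_Un_disjoint power_add sum_divide_distrib mult.commute)
  next
    case False
    then have "\<not> (\<forall>j\<in>A \<union> B. x j = y j)" by blast
    moreover have "depolarize q A (depolarize q B X) x y = 0"
    proof (cases "\<forall>j\<in>A. x j = y j")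
      case True
      with False have "(\<forall>j\<in>B. x j = y j) = False" by blast
      then show ?thesis by (simp only: depolarize_def agree_B partial_trace_def[of q A]) simp
    qed (auto simp: depolarize_def)
    ultimately show ?thesis by (auto simp: depolarize_def[of q "A \<union> B"])
  qed
qed

definition hs_inner :: "nat set \<Rightarrow> nat \<Rightarrow> matrix \<Rightarrow> matrix \<Rightarrow> complex" where
  "hs_inner D q X Y = (\<Sum>x\<in>tuples D q. \<Sum>y\<in>tuples D q. X x y * cnj (Y x y))"

definition hs_norm_sq :: "nat set \<Rightarrow> nat \<Rightarrow> matrix \<Rightarrow> real" where
  "hs_norm_sq D q X = (\<Sum>x\<in>tuples D q. \<Sum>y\<in>tuples D q. (cmod (X x y))\<^sup>2)"

lemma hs_inner_self: "hs_inner D q X X = of_real (hs_norm_sq D q X)"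
  by (simp only: hs_inner_def hs_norm_sq_def of_real_sum complex_norm_square)

lemma hs_norm_sq_nonneg: "0 \<le> hs_norm_sq D q X"
  unfolding hs_norm_sq_def by (intro sum_nonneg) auto

lemma cnj_hs_inner: "cnj (hs_inner D q X Y) = hs_inner D q Y X"
  by (simp add: hs_inner_def cnj_sum mult.commute)

lemma hs_inner_depolarize:
  assumes "finite D" "A \<subseteq> D"
  shows "hs_inner D q (depolarize q A X) Y =
    (\<Sum>a\<in>tuples (D - A) q. \<Sum>b\<in>tuples (D - A) q.
       partial_trace q A X a b * cnj (partial_trace q A Y a b)) / of_nat q ^ card A"
proof -
  have fin: "finite A" using assms finite_subset by blast
  have diagonal: "(\<Sum>e\<in>tuples A q. depolarize q A X (override_on a c A) (override_on b e A)
        * cnj (Y (override_on a c A) (override_on b e A)))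
      = partial_trace q A X a b / of_nat q ^ card A * cnj (Y (override_on a c A) (override_on b c A))"
    if c: "c \<in> tuples A q" for a b c
  proof -
    have "(\<Sum>e\<in>tuples A q. depolarize q A X (override_on a c A) (override_on b e A)
          * cnj (Y (override_on a c A) (override_on b e A)))
        = (\<Sum>e\<in>tuples A q. if c = e then partial_trace q A X a b / of_nat q ^ card A
            * cnj (Y (override_on a c A) (override_on b e A)) else 0)"
      by (intro sum.cong refl) (simp add: depolarize_def tuples_eq_iff[OF c])
    then show ?thesis using c fin by simp
  qed
  have "hs_inner D q (depolarize q A X) Y
      = (\<Sum>a\<in>tuples (D - A) q. \<Sum>c\<in>tuples A q. \<Sum>b\<in>tuples (D - A) q. \<Sum>e\<in>tuples A q.
           depolarize q A X (override_on a c A) (override_on b e A)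
           * cnj (Y (override_on a c A) (override_on b e A)))"
    unfolding hs_inner_def by (simp only: sum_tuples_split[OF assms(2)])
  also have "\<dots> = (\<Sum>a\<in>tuples (D - A) q. \<Sum>c\<in>tuples A q. \<Sum>b\<in>tuples (D - A) q.
      partial_trace q A X a b / of_nat q ^ card A * cnj (Y (override_on a c A) (override_on b c A)))"
    by (intro sum.cong refl) (simp add: diagonal)
  also have "\<dots> = (\<Sum>a\<in>tuples (D - A) q. \<Sum>b\<in>tuples (D - A) q. \<Sum>c\<in>tuples A q.
      partial_trace q A X a b / of_nat q ^ card A * cnj (Y (override_on a c A) (override_on b c A)))"
    by (rule sum.cong[OF refl], rule sum.swap)
  also have "\<dots> = (\<Sum>a\<in>tuples (D - A) q. \<Sum>b\<in>tuples (D - A) q.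
      partial_trace q A X a b * cnj (partial_trace q A Y a b)) / of_nat q ^ card A"
    by (simp add: partial_trace_def[of q A Y] cnj_sum sum_distrib_left sum_divide_distrib)
  finally show ?thesis .
qed

lemma depolarize_self_adjoint:
  assumes "finite D" "A \<subseteq> D"
  shows "hs_inner D q (depolarize q A X) Y = hs_inner D q X (depolarize q A Y)"
proof -
  have "hs_inner D q X (depolarize q A Y) = cnj (hs_inner D q (depolarize q A Y) X)"
    by (simp add: cnj_hs_inner)
  also have "\<dots> = hs_inner D q (depolarize q A X) Y"
    using assms by (simp add: hs_inner_depolarize cnj_sum mult.commute)
  finally show ?thesis ..
qed

lemma hs_norm_sq_depolarize:
  assumes "finite D" "A \<subseteq> D" "q > 0"
  shows "hs_norm_sq D q (depolarize q A X) =
    (\<Sum>a\<in>tuples (D - A) q. \<Sum>b\<in>tuples (D - A) q. (cmod (partial_trace q A X a b))\<^sup>2) / real q ^ card A"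
proof -
  have "finite A" using assms finite_subset by blast
  then have "complex_of_real (hs_norm_sq D q (depolarize q A X))
      = (\<Sum>a\<in>tuples (D - A) q. \<Sum>b\<in>tuples (D - A) q.
          partial_trace q A X a b * cnj (partial_trace q A X a b)) / of_nat q ^ card A"
    using assms by (simp flip: hs_inner_self add: hs_inner_depolarize)
  also have "\<dots> = complex_of_real ((\<Sum>a\<in>tuples (D - A) q. \<Sum>b\<in>tuples (D - A) q.
      (cmod (partial_trace q A X a b))\<^sup>2) / real q ^ card A)"
    using assms by (simp only: of_real_divide of_real_sum complex_norm_square of_real_power[of "real q"]
        of_real_of_nat_eq)
  finally show ?thesis
    using of_real_eq_iff by blast
qed

lemma hs_norm_sq_pythagoras:
  assumes "finite D" "A \<subseteq> D" "q > 0"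
  shows "hs_norm_sq D q X = hs_norm_sq D q (depolarize q A X)
    + hs_norm_sq D q (\<lambda>x y. X x y - depolarize q A X x y)"
proof -
  have fin: "finite A" using assms finite_subset by blast
  let ?P = "depolarize q A X" and ?Q = "\<lambda>x y. X x y - depolarize q A X x y"
  have "hs_inner D q ?P ?Q = hs_inner D q X (depolarize q A ?Q)"
    by (rule depolarize_self_adjoint[OF assms(1,2)])
  also have "depolarize q A ?Q = (\<lambda>x y. 0)"
    using fin assms by (simp add: depolarize_diff)
  finally have PQ: "hs_inner D q ?P ?Q = 0" by (simp add: hs_inner_def)
  then have QP: "hs_inner D q ?Q ?P = 0" by (metis cnj_hs_inner complex_cnj_zero)
  have "hs_inner D q X X = hs_inner D q ?P ?P + hs_inner D q ?P ?Q + hs_inner D q ?Q ?P + hs_inner D q ?Q ?Q"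
    unfolding hs_inner_def by (simp add: sum.distrib[symmetric] algebra_simps)
  then show ?thesis
    using PQ QP by (simp add: hs_inner_self flip: of_real_add)
qed

text \<open>Splitting off one party at a time by Pythagoras, the alternating sum becomes the
  squared norm of \<open>(\<Prod>i\<in>R. id - depolarize q {i}) X\<close>.\<close>
lemma alternating_sum_hs_norm_sq_depolarize_nonneg:
  assumes "finite D" "R \<subseteq> D" "q > 0"
  shows "0 \<le> (\<Sum>W\<in>Pow R. (-1) ^ card W * hs_norm_sq D q (depolarize q W X))"
proof -
  have "finite R" using assms finite_subset by blast
  then show ?thesis
    using assms(2)
  proof (induction R arbitrary: X rule: finite_induct)
    case empty
    then show ?case by (simp add: hs_norm_sq_nonneg)
  next
    case (insert i R)
    let ?X' = "\<lambda>x y. X x y - depolarize q {i} X x y"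
    have step: "(-1) ^ card W * hs_norm_sq D q (depolarize q W X)
          + (-1) ^ card (insert i W) * hs_norm_sq D q (depolarize q (insert i W) X)
        = (-1) ^ card W * hs_norm_sq D q (depolarize q W ?X')" if "W \<in> Pow R" for W
    proof -
      have W: "finite W" "i \<notin> W" using that insert finite_subset by auto
      have split_i: "depolarize q (insert i W) X = depolarize q W (depolarize q {i} X)"
        using depolarize_depolarize[of W "{i}" q X] W by simp
      have commute: "depolarize q {i} (depolarize q W X) = depolarize q W (depolarize q {i} X)"
        using depolarize_depolarize[of W "{i}" q X] depolarize_depolarize[of "{i}" W q X] W
        by (simp add: Un_commute)
      have "hs_norm_sq D q (depolarize q W X)
          = hs_norm_sq D q (depolarize q W (depolarize q {i} X)) + hs_norm_sq D q (depolarize q W ?X')"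
        using hs_norm_sq_pythagoras[OF assms(1) _ assms(3), of "{i}" "depolarize q W X"] insert.prems
        by (simp add: commute depolarize_diff)
      then show ?thesis using W by (simp add: split_i algebra_simps)
    qed
    have disjoint: "Pow R \<inter> insert i ` Pow R = {}" using insert.hyps by auto
    have inj: "inj_on (insert i) (Pow R)"
      using insert unfolding inj_on_def by (metis Pow_iff insert_ident subset_iff)
    have "(\<Sum>W\<in>Pow (insert i R). (-1) ^ card W * hs_norm_sq D q (depolarize q W X))
        = (\<Sum>W\<in>Pow R. (-1) ^ card W * hs_norm_sq D q (depolarize q W X))
          + (\<Sum>W\<in>Pow R. (-1) ^ card (insert i W) * hs_norm_sq D q (depolarize q (insert i W) X))"
      using insert.hyps inj by (simp add: Pow_insert sum.union_disjoint disjoint sum.reindex)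
    also have "\<dots> = (\<Sum>W\<in>Pow R. (-1) ^ card W * hs_norm_sq D q (depolarize q W ?X'))"
      by (simp add: sum.distrib[symmetric] step)
    finally show ?case using insert by simp
  qed
qed

definition projector :: "((nat \<Rightarrow> nat) \<Rightarrow> complex) \<Rightarrow> matrix" where
  "projector psi x y = psi x * cnj (psi y)"

lemma reduced_state_eq_partial_trace:
  assumes "a \<in> tuples S q" "b \<in> tuples S q"
  shows "reduced_state n q psi S a b = partial_trace q ({0..<n} - S) (projector psi) a b"
  unfolding reduced_state_def partial_trace_def projector_def
  by (intro sum.cong refl) (simp only: override_on_Diff_tuples[OF assms(1)]
      override_on_Diff_tuples[OF assms(2)])

text \<open>This is \<open>tr \<rho>\<^sub>S\<^sup>2\<close>, as \<open>\<rho>\<^sub>S\<close> is Hermitian.\<close>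
definition purity :: "nat \<Rightarrow> nat \<Rightarrow> ((nat \<Rightarrow> nat) \<Rightarrow> complex) \<Rightarrow> nat set \<Rightarrow> real" where
  "purity n q psi S = (\<Sum>a\<in>tuples S q. \<Sum>b\<in>tuples S q. (cmod (reduced_state n q psi S a b))\<^sup>2)"

lemma hs_norm_sq_depolarize_projector:
  assumes "q > 0" "S \<subseteq> {0..<n}"
  shows "real q ^ n * hs_norm_sq {0..<n} q (depolarize q ({0..<n} - S) (projector psi))
    = real q ^ card S * purity n q psi S"
proof -
  have "{0..<n} - ({0..<n} - S) = S" using assms by auto
  then have "hs_norm_sq {0..<n} q (depolarize q ({0..<n} - S) (projector psi))
      = purity n q psi S / real q ^ card ({0..<n} - S)"
    using assms by (simp add: hs_norm_sq_depolarize purity_def reduced_state_eq_partial_trace)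
  moreover have "card ({0..<n} - S) = n - card S" "card S \<le> n"
    using assms card_mono[OF _ assms(2)] by (auto simp: card_Diff_subset finite_subset)
  ultimately show ?thesis
    using assms by (simp add: power_diff)
qed

lemma purity_Diff:
  assumes "S \<subseteq> {0..<n}"
  shows "purity n q psi ({0..<n} - S) = purity n q psi S"
proof -
  let ?C = "tuples ({0..<n} - S) q"
  define T where "T a b c e = psi (override_on c a S) * cnj (psi (override_on c b S))
    * (cnj (psi (override_on e a S)) * psi (override_on e b S))" for a b c e
  have S: "complex_of_real ((cmod (reduced_state n q psi S a b))\<^sup>2) = (\<Sum>c\<in>?C. \<Sum>e\<in>?C. T a b c e)"
    for a b
    by (simp only: complex_norm_square)
      (simp add: reduced_state_def T_def override_on_def sum_product cnj_sum)
  have Diff_Diff: "{0..<n} - ({0..<n} - S) = S" using assms by auto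
  have Diff: "complex_of_real ((cmod (reduced_state n q psi ({0..<n} - S) c e))\<^sup>2)
      = (\<Sum>a\<in>tuples S q. \<Sum>b\<in>tuples S q. T a b c e)"
    if "c \<in> ?C" "e \<in> ?C" for c e
  proof -
    have "reduced_state n q psi ({0..<n} - S) c e
        = (\<Sum>a\<in>tuples S q. psi (override_on c a S) * cnj (psi (override_on e a S)))"
      unfolding reduced_state_def Diff_Diff
      by (intro sum.cong refl)
        (simp only: override_on_Diff_tuples[OF _ that(1), unfolded override_on_def]
          override_on_Diff_tuples[OF _ that(2), unfolded override_on_def] override_on_def)
    then have "complex_of_real ((cmod (reduced_state n q psi ({0..<n} - S) c e))\<^sup>2)
        = (\<Sum>a\<in>tuples S q. \<Sum>b\<in>tuples S q. psi (override_on c a S) * cnj (psi (override_on e a S))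
            * (cnj (psi (override_on c b S)) * psi (override_on e b S)))"
      by (simp only: complex_norm_square) (simp add: sum_product cnj_sum)
    also have "\<dots> = (\<Sum>a\<in>tuples S q. \<Sum>b\<in>tuples S q. T a b c e)"
      unfolding T_def by (intro sum.cong refl) (simp only: ac_simps)
    finally show ?thesis .
  qed
  have "complex_of_real (purity n q psi ({0..<n} - S)) = (\<Sum>c\<in>?C. \<Sum>e\<in>?C. \<Sum>a\<in>tuples S q. \<Sum>b\<in>tuples S q. T a b c e)"
    unfolding purity_def of_real_sum by (intro sum.cong refl) (simp only: Diff)
  also have "\<dots> = (\<Sum>c\<in>?C. \<Sum>a\<in>tuples S q. \<Sum>b\<in>tuples S q. \<Sum>e\<in>?C. T a b c e)"
    by (rule sum.cong[OF refl], subst sum.swap, rule sum.cong[OF refl], rule sum.swap)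
  also have "\<dots> = (\<Sum>a\<in>tuples S q. \<Sum>b\<in>tuples S q. \<Sum>c\<in>?C. \<Sum>e\<in>?C. T a b c e)"
    by (subst sum.swap, rule sum.cong[OF refl], rule sum.swap)
  also have "\<dots> = complex_of_real (purity n q psi S)"
    unfolding purity_def of_real_sum by (simp only: S)
  finally show ?thesis
    using of_real_eq_iff by blast
qed

lemma trace_reduced_state:
  assumes "is_pure_state n q psi" "S \<subseteq> {0..<n}"
  shows "(\<Sum>a\<in>tuples S q. reduced_state n q psi S a a) = 1"
proof -
  have "(\<Sum>a\<in>tuples S q. reduced_state n q psi S a a)
      = (\<Sum>c\<in>tuples ({0..<n} - S) q. \<Sum>a\<in>tuples S q.
          psi (override_on c a S) * cnj (psi (override_on c a S)))"
    unfolding reduced_state_def by (subst sum.swap) (simp add: override_on_def)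
  also have "\<dots> = complex_of_real (\<Sum>x\<in>tuples {0..<n} q. (cmod (psi x))\<^sup>2)"
    by (simp only: sum_tuples_split[OF assms(2)] of_real_sum complex_norm_square)
  also have "\<dots> = 1"
    using assms(1) by (simp add: is_pure_state_def)
  finally show ?thesis .
qed

lemma purity_ge:
  assumes "is_pure_state n q psi" "S \<subseteq> {0..<n}"
  shows "1 / real q ^ card S \<le> purity n q psi S"
proof -
  let ?d = "\<lambda>a. cmod (reduced_state n q psi S a a)"
  have fin: "finite S" using assms finite_subset by blast
  have "1 = cmod (\<Sum>a\<in>tuples S q. reduced_state n q psi S a a)"
    using trace_reduced_state[OF assms] by simp
  also have "\<dots> \<le> (\<Sum>a\<in>tuples S q. ?d a)"
    by (rule norm_sum)
  finally have "1 \<le> (\<Sum>a\<in>tuples S q. ?d a)\<^sup>2"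
    by (simp add: one_le_power)
  also have "\<dots> \<le> (\<Sum>a\<in>tuples S q. (?d a)\<^sup>2) * card (tuples S q)"
    by (rule sum_squared_le_sum_of_squares)
  also have "\<dots> = (\<Sum>a\<in>tuples S q. (?d a)\<^sup>2) * real q ^ card S"
    using fin by (simp add: card_tuples)
  also have "\<dots> \<le> purity n q psi S * real q ^ card S"
    unfolding purity_def using fin by (intro mult_right_mono sum_mono member_le_sum) auto
  finally have "1 \<le> purity n q psi S * real q ^ card S" .
  moreover have "0 \<le> purity n q psi S"
    unfolding purity_def by (intro sum_nonneg) auto
  ultimately show ?thesis
    by (cases "real q ^ card S = 0") (auto simp: divide_le_eq)
qed

lemma k_uniform_reduced_state:
  assumes "k_uniform n q k psi" "q > 0" "k \<le> n" "S \<subseteq> {0..<n}" "card S \<le> k"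
    and a: "a \<in> tuples S q" and b: "b \<in> tuples S q"
  shows "reduced_state n q psi S a b = (if a = b then 1 / of_nat q ^ card S else 0)"
proof -
  have fin: "finite S" using assms finite_subset by blast
  have "k - card S \<le> card ({0..<n} - S)"
    using assms fin by (simp add: card_Diff_subset)
  then obtain T where T: "T \<subseteq> {0..<n} - S" "card T = k - card S" "finite T"
    by (rule obtain_subset_with_card_n)
  let ?S' = "S \<union> T"
  have "S \<inter> T = {}" using T by auto
  then have S': "?S' \<subseteq> {0..<n}" "card ?S' = k"
    using T assms(4,5) fin by (auto simp: card_Un_disjoint)
  have Diff_split: "{0..<n} - S = T \<union> ({0..<n} - ?S')" "T \<inter> ({0..<n} - ?S') = {}"
    using T by auto
  have extend: "override_on a c T \<in> tuples ?S' q" "override_on b c T \<in> tuples ?S' q"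
    if "c \<in> tuples T q" for c
    using override_on_in_tuples[OF a that] override_on_in_tuples[OF b that] by auto
  have restrict_extend: "restrict (override_on x c T) S = x" if "x \<in> tuples S q" for x c
    using that T(1) unfolding tuples_def PiE_iff extensional_def
    by (auto simp: fun_eq_iff override_on_def)
  have extend_eq_iff: "override_on a c T = override_on b c T \<longleftrightarrow> a = b" for c
    using restrict_extend[OF a, of c] restrict_extend[OF b, of c] by metis
  have uniform: "reduced_state n q psi ?S' a' b' = (if a' = b' then 1 / of_nat (q ^ k) else 0)"
    if "a' \<in> tuples ?S' q" "b' \<in> tuples ?S' q" for a' b'
    using assms(1) S' that unfolding k_uniform_def by blast
  have "reduced_state n q psi S a b
      = partial_trace q T (partial_trace q ({0..<n} - ?S') (projector psi)) a b"
    using a b by (simp add: reduced_state_eq_partial_trace Diff_split partial_trace_Un)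
  also have "\<dots> = (\<Sum>c\<in>tuples T q. reduced_state n q psi ?S' (override_on a c T) (override_on b c T))"
    unfolding partial_trace_def[of q T]
    by (intro sum.cong refl) (simp add: reduced_state_eq_partial_trace extend)
  also have "\<dots> = (\<Sum>c\<in>tuples T q. if a = b then 1 / of_nat (q ^ k) else 0)"
    by (intro sum.cong refl) (simp add: uniform extend extend_eq_iff)
  also have "\<dots> = (if a = b then 1 / of_nat q ^ card S else 0)"
    using assms T fin by (simp add: card_tuples power_diff[of "of_nat q :: complex"])
  finally show ?thesis .
qed

lemma k_uniform_purity:
  assumes "k_uniform n q k psi" "q > 0" "k \<le> n" "S \<subseteq> {0..<n}" "card S \<le> k"
  shows "purity n q psi S = 1 / real q ^ card S"
proof -
  have "finite S" using assms finite_subset by blast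
  then have "purity n q psi S = (\<Sum>a\<in>tuples S q. (1 / real q ^ card S)\<^sup>2)"
    unfolding purity_def using k_uniform_reduced_state[OF assms]
    by (intro sum.cong refl) (simp add: if_distrib[of "\<lambda>z. (cmod z)\<^sup>2"] sum.delta norm_divide
        norm_power cong: if_cong)
  then show ?thesis
    using \<open>finite S\<close> assms(2) by (simp add: card_tuples power2_eq_square)
qed

definition scaled_purity :: "nat \<Rightarrow> nat \<Rightarrow> ((nat \<Rightarrow> nat) \<Rightarrow> complex) \<Rightarrow> nat set \<Rightarrow> real" where
  "scaled_purity n q psi S = real q ^ card S * purity n q psi S"

text \<open>Rains' coefficient \<open>A\<^sub>R\<close>: the share of the scaled purities carried by the operators
  supported exactly on \<open>R\<close>.\<close>
definition support_weight :: "nat \<Rightarrow> nat \<Rightarrow> ((nat \<Rightarrow> nat) \<Rightarrow> complex) \<Rightarrow> nat set \<Rightarrow> real" where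
  "support_weight n q psi R = (-1) ^ card R * (\<Sum>T\<in>Pow R. (-1) ^ card T * scaled_purity n q psi T)"

lemma scaled_purity_eq_sum_support_weight:
  "finite S \<Longrightarrow> scaled_purity n q psi S = (\<Sum>R\<in>Pow S. support_weight n q psi R)"
  unfolding support_weight_def by (rule inclusion_exclusion_symmetric) simp_all

lemma support_weight_nonneg:
  assumes "q > 0" "R \<subseteq> {0..<n}"
  shows "0 \<le> support_weight n q psi R"
proof -
  let ?D = "{0..<n}"
  let ?Y = "depolarize q (?D - R) (projector psi)"
  have fin: "finite R" using assms finite_subset by blast
  have "support_weight n q psi R = (\<Sum>T\<in>Pow R. (-1) ^ (card R + card T) * scaled_purity n q psi T)"
    unfolding support_weight_def by (simp add: sum_distrib_left power_add mult.assoc)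
  also have "\<dots> = (\<Sum>W\<in>Pow R. (-1) ^ (card R + card (R - W)) * scaled_purity n q psi (R - W))"
    by (rule sum.reindex_bij_witness[where i = "\<lambda>T. R - T" and j = "\<lambda>W. R - W"])
      (auto simp: double_diff)
  also have "\<dots> = (\<Sum>W\<in>Pow R. real q ^ n * ((-1) ^ card W * hs_norm_sq ?D q (depolarize q W ?Y)))"
  proof (rule sum.cong[OF refl])
    fix W assume "W \<in> Pow R"
    then have W: "W \<subseteq> R" "finite W" using fin finite_subset by auto
    have "card R + card (R - W) = card W + 2 * (card R - card W)"
      using W fin card_mono[OF fin W(1)] by (simp add: card_Diff_subset)
    then have sign: "(-1::real) ^ (card R + card (R - W)) = (-1) ^ card W"
      by (simp add: power_add power_mult)
    have "?D - (R - W) = W \<union> (?D - R)" "W \<inter> (?D - R) = {}"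
      using W assms(2) by auto
    then have "depolarize q (?D - (R - W)) (projector psi) = depolarize q W ?Y"
      using W by (simp add: depolarize_depolarize)
    moreover have "R - W \<subseteq> ?D" using assms(2) by auto
    ultimately show "(-1) ^ (card R + card (R - W)) * scaled_purity n q psi (R - W)
        = real q ^ n * ((-1) ^ card W * hs_norm_sq ?D q (depolarize q W ?Y))"
      using hs_norm_sq_depolarize_projector[OF assms(1), of "R - W" n psi]
      by (simp add: scaled_purity_def sign)
  qed
  also have "\<dots> = real q ^ n * (\<Sum>W\<in>Pow R. (-1) ^ card W * hs_norm_sq ?D q (depolarize q W ?Y))"
    by (simp add: sum_distrib_left)
  finally show ?thesis
    using alternating_sum_hs_norm_sq_depolarize_nonneg[of ?D R q ?Y] assms by simp
qed

lemma k_uniform_scaled_purity: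
  assumes "k_uniform n q k psi" "q > 0" "k \<le> n" "S \<subseteq> {0..<n}" "card S \<le> k"
  shows "scaled_purity n q psi S = 1"
  using k_uniform_purity[OF assms] assms(2) by (simp add: scaled_purity_def)

lemma k_uniform_support_weight_eq_0:
  assumes "k_uniform n q k psi" "q > 0" "k \<le> n" "R \<subseteq> {0..<n}" "card R \<le> k" "R \<noteq> {}"
  shows "support_weight n q psi R = 0"
proof -
  have fin: "finite R" using assms finite_subset by blast
  have "(\<Sum>T\<in>Pow R. (-1) ^ card T * scaled_purity n q psi T) = (\<Sum>T\<in>Pow R. (-1::real) ^ card T)"
  proof (rule sum.cong[OF refl])
    fix T assume "T \<in> Pow R"
    then have "T \<subseteq> R" by simp
    then have "T \<subseteq> {0..<n}" "card T \<le> k"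
      using assms(4,5) card_mono[OF fin \<open>T \<subseteq> R\<close>] by auto
    then show "(-1) ^ card T * scaled_purity n q psi T = (-1) ^ card T"
      using k_uniform_scaled_purity[OF assms(1-3)] by simp
  qed
  also have "\<dots> = (\<Prod>i\<in>R. 1 - 1)"
    using prod_diff_conv_sum[OF fin, of "\<lambda>_. 1::real" "\<lambda>_. 1"]
    by (simp only: prod.neutral_const mult_1_right)
  also have "\<dots> = 0"
    using fin assms(6) by (simp add: card_gt_0_iff)
  finally show ?thesis
    by (simp add: support_weight_def)
qed

lemma card_supersets_of_card:
  assumes "finite D" "R \<subseteq> D" "card R \<le> m"
  shows "card {S. S \<subseteq> D \<and> card S = m \<and> R \<subseteq> S} = (card D - card R) choose (m - card R)"
proof -
  have fin: "finite R" using assms finite_subset by blast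
  have "{S. S \<subseteq> D \<and> card S = m \<and> R \<subseteq> S} = (\<lambda>U. U \<union> R) ` {U. U \<subseteq> D - R \<and> card U = m - card R}"
  proof (intro equalityI subsetI)
    fix S assume S: "S \<in> {S. S \<subseteq> D \<and> card S = m \<and> R \<subseteq> S}"
    then have "S - R \<subseteq> D - R \<and> card (S - R) = m - card R"
      using assms fin by (auto simp: card_Diff_subset)
    moreover have "S = (S - R) \<union> R" using S by auto
    ultimately show "S \<in> (\<lambda>U. U \<union> R) ` {U. U \<subseteq> D - R \<and> card U = m - card R}" by blast
  next
    fix S assume "S \<in> (\<lambda>U. U \<union> R) ` {U. U \<subseteq> D - R \<and> card U = m - card R}"
    then obtain U where U: "U \<subseteq> D - R" "card U = m - card R" "S = U \<union> R" by blast
    moreover have "U \<inter> R = {}" using U(1) by blast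
    ultimately have "card S = card U + card R"
      using assms fin finite_subset[OF U(1)] by (simp add: card_Un_disjoint)
    then show "S \<in> {S. S \<subseteq> D \<and> card S = m \<and> R \<subseteq> S}"
      using U assms by auto
  qed
  moreover have "inj_on (\<lambda>U. U \<union> R) {U. U \<subseteq> D - R \<and> card U = m - card R}"
    by (rule inj_onI) blast
  ultimately have "card {S. S \<subseteq> D \<and> card S = m \<and> R \<subseteq> S} = card {U. U \<subseteq> D - R \<and> card U = m - card R}"
    by (simp add: card_image)
  also have "\<dots> = (card D - card R) choose (m - card R)"
    using assms fin by (simp add: n_subsets card_Diff_subset)
  finally show ?thesis .
qed

text \<open>\<open>(M + 1 choose j) = (M + 1) / (M + 1 - j) * (M choose j)\<close>, and the factor grows with \<open>j\<close>.\<close>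
lemma choose_ratio_mono:
  assumes "k \<le> b" "b \<le> N" "N \<le> M"
  shows "(M choose k) * (N choose b) \<le> (N choose k) * (M choose b)"
  using assms(3)
proof (induction M rule: dec_induct)
  case base
  then show ?case by (simp add: mult.commute)
next
  case (step M)
  define x where "x = Suc M"
  have absorb_k: "(x - k) * (x choose k) = x * (M choose k)"
    and absorb_b: "(x - b) * (x choose b) = x * (M choose b)"
    using binomial_absorb_comp[of x k] binomial_absorb_comp[of x b] by (simp_all add: x_def)
  have pos: "0 < (x - b) * (x - k)" using assms step.hyps by (simp add: x_def)
  have "((x - b) * (x - k)) * ((x choose k) * (N choose b)) = (x - b) * x * ((M choose k) * (N choose b))"
    using absorb_k by (metis mult.assoc mult.commute)
  also have "\<dots> \<le> (x - k) * x * ((N choose k) * (M choose b))"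
    by (rule mult_le_mono[OF mult_le_mono1[OF diff_le_mono2[OF assms(1)]] step.IH])
  also have "\<dots> = ((x - b) * (x - k)) * ((N choose k) * (x choose b))"
    using absorb_b by (metis mult.assoc mult.commute)
  finally show ?case
    using pos by (simp add: x_def)
qed

lemma k_uniform_sum_scaled_purity_eq:
  assumes "k_uniform n q k psi" "q > 0" "k \<le> n"
  shows "(\<Sum>S | S \<subseteq> {0..<n} \<and> card S = m. scaled_purity n q psi S - 1)
    = (\<Sum>R | R \<subseteq> {0..<n} \<and> k < card R.
        support_weight n q psi R * card {S. S \<subseteq> {0..<n} \<and> card S = m \<and> R \<subseteq> S})"
proof -
  let ?Sm = "{S. S \<subseteq> {0..<n} \<and> card S = m}" and ?Rk = "{R. R \<subseteq> {0..<n} \<and> k < card R}"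
  have fin: "finite ?Sm" "finite ?Rk" by (auto intro: finite_subset[of _ "Pow {0..<n}"])
  have "scaled_purity n q psi S - 1 = (\<Sum>R\<in>{R \<in> ?Rk. R \<subseteq> S}. support_weight n q psi R)"
    if S: "S \<subseteq> {0..<n}" for S
  proof -
    have finS: "finite S" using S finite_subset by blast
    have "scaled_purity n q psi S = support_weight n q psi {} + (\<Sum>R\<in>Pow S - {{}}. support_weight n q psi R)"
      using finS by (simp add: scaled_purity_eq_sum_support_weight sum.remove[of "Pow S" "{}"])
    moreover have "support_weight n q psi {} = 1"
      using k_uniform_scaled_purity[OF assms, of "{}"] by (simp add: support_weight_def)
    moreover have "(\<Sum>R\<in>Pow S - {{}}. support_weight n q psi R) = (\<Sum>R\<in>{R \<in> ?Rk. R \<subseteq> S}. support_weight n q psi R)"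
      using finS S
      by (intro sum.mono_neutral_right) (auto simp: not_less intro!: k_uniform_support_weight_eq_0[OF assms])
    ultimately show ?thesis by simp
  qed
  then have "(\<Sum>S\<in>?Sm. scaled_purity n q psi S - 1) = (\<Sum>S\<in>?Sm. \<Sum>R\<in>{R \<in> ?Rk. R \<subseteq> S}. support_weight n q psi R)"
    by (intro sum.cong) auto
  also have "\<dots> = (\<Sum>R\<in>?Rk. \<Sum>S\<in>{S \<in> ?Sm. R \<subseteq> S}. support_weight n q psi R)"
    by (rule sum.swap_restrict[OF fin])
  also have "\<dots> = (\<Sum>R\<in>?Rk. support_weight n q psi R * card {S. S \<subseteq> {0..<n} \<and> card S = m \<and> R \<subseteq> S})"
    by (simp add: mult.commute conj_assoc)
  finally show ?thesis .
qed

text \<open>Both sums weight \<open>A\<^sub>R\<close> (\<open>|R| > k\<close>) by numbers of supersets of \<open>R\<close>; the ratio of the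
  weights is smallest for \<open>|R| = k + 1\<close>.\<close>
lemma k_uniform_sum_scaled_purity_le:
  assumes "k_uniform n q k psi" "q > 0" "k < m" "m + k \<le> n"
  shows "real ((n - k - 1) choose k) * (\<Sum>S | S \<subseteq> {0..<n} \<and> card S = m. scaled_purity n q psi S - 1)
    \<le> real ((n - k - 1) choose (n - m)) * (\<Sum>S | S \<subseteq> {0..<n} \<and> card S = n - k. scaled_purity n q psi S - 1)"
proof -
  let ?cnt = "\<lambda>m R. real (card {S. S \<subseteq> {0..<n} \<and> card S = m \<and> R \<subseteq> S})"
  have counts: "real ((n - k - 1) choose k) * ?cnt m R \<le> real ((n - k - 1) choose (n - m)) * ?cnt (n - k) R"
    if R: "R \<subseteq> {0..<n}" "k < card R" for R
  proof (cases "card R \<le> m")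
    case True
    let ?N = "n - card R"
    have "?cnt m R = real (?N choose (n - m))"
      using card_supersets_of_card[OF _ R(1) True] binomial_symmetric[of "m - card R" ?N] True assms
      by simp
    moreover have "?cnt (n - k) R = real (?N choose k)"
      using card_supersets_of_card[OF _ R(1), of "n - k"] binomial_symmetric[of "n - k - card R" ?N]
        True assms by simp
    moreover have "(n - k - 1 choose k) * (?N choose (n - m)) \<le> (?N choose k) * (n - k - 1 choose (n - m))"
      using True R assms by (intro choose_ratio_mono) auto
    ultimately show ?thesis
      by (simp flip: of_nat_mult add: mult.commute)
  next
    case False
    then have "{S. S \<subseteq> {0..<n} \<and> card S = m \<and> R \<subseteq> S} = {}"
      using card_mono[OF finite_subset] by fastforce
    then have no_supersets: "?cnt m R = 0" by (metis card.empty of_nat_0)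
    show ?thesis by (simp only: no_supersets mult_zero_right) simp
  qed
  have "k \<le> n" using assms by simp
  show ?thesis
    unfolding k_uniform_sum_scaled_purity_eq[OF assms(1,2) \<open>k \<le> n\<close>] sum_distrib_left
  proof (rule sum_mono)
    fix R assume "R \<in> {R. R \<subseteq> {0..<n} \<and> k < card R}"
    then show "real ((n - k - 1) choose k) * (support_weight n q psi R * ?cnt m R)
        \<le> real ((n - k - 1) choose (n - m)) * (support_weight n q psi R * ?cnt (n - k) R)"
      using counts[of R] support_weight_nonneg[OF assms(2), of R]
      by (simp add: mult.left_commute mult_left_mono)
  qed
qed

lemma sum_scaled_purity_ge:
  assumes "is_pure_state n q psi" "q > 0" "n \<le> 2 * m"
  shows "real (n choose m) * (real q ^ (2 * m - n) - 1)
    \<le> (\<Sum>S | S \<subseteq> {0..<n} \<and> card S = m. scaled_purity n q psi S - 1)"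
proof -
  have "real q ^ (2 * m - n) \<le> scaled_purity n q psi S"
    if S: "S \<subseteq> {0..<n}" "card S = m" for S
  proof -
    have "card ({0..<n} - S) = n - m" "m \<le> n"
      using S card_mono[OF _ S(1)] by (auto simp: card_Diff_subset finite_subset)
    moreover have "2 * m - n = m - (n - m)" "n - m \<le> m"
      using \<open>m \<le> n\<close> assms(3) by auto
    ultimately have "real q ^ (2 * m - n) = real q ^ m * (1 / real q ^ card ({0..<n} - S))"
      using assms(2) by (simp add: power_diff power_add)
    also have "\<dots> \<le> real q ^ m * purity n q psi ({0..<n} - S)"
      using purity_ge[OF assms(1), of "{0..<n} - S"] by (intro mult_left_mono) auto
    finally show ?thesis
      using S by (simp add: scaled_purity_def purity_Diff)
  qed
  then have "(\<Sum>S | S \<subseteq> {0..<n} \<and> card S = m. real q ^ (2 * m - n) - 1)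
      \<le> (\<Sum>S | S \<subseteq> {0..<n} \<and> card S = m. scaled_purity n q psi S - 1)"
    by (intro sum_mono) auto
  then show ?thesis
    by (simp add: n_subsets)
qed

lemma k_uniform_sum_scaled_purity_n_minus_k:
  assumes "k_uniform n q k psi" "q > 0" "2 * k \<le> n"
  shows "(\<Sum>S | S \<subseteq> {0..<n} \<and> card S = n - k. scaled_purity n q psi S - 1)
    = real (n choose (n - k)) * (real q ^ (n - 2 * k) - 1)"
proof -
  have "scaled_purity n q psi S = real q ^ (n - 2 * k)"
    if S: "S \<subseteq> {0..<n}" "card S = n - k" for S
  proof -
    have "card ({0..<n} - S) = k"
      using S assms(3) by (simp add: card_Diff_subset finite_subset)
    then have "purity n q psi ({0..<n} - S) = 1 / real q ^ k"
      using k_uniform_purity[OF assms(1,2), of "{0..<n} - S"] assms(3) by simp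
    then show ?thesis
      using S assms(2,3) by (simp add: scaled_purity_def purity_Diff power_diff mult_2 power_add)
  qed
  then show ?thesis
    by (simp add: n_subsets)
qed

theorem theorem5:
  fixes q n k u v :: nat
  assumes "q \<ge> 2"
    and "k + 1 \<le> n div 2"
    and "u = n div 2 + 1"
    and "v = n - k"
    and "u < v"
    and "real ((n - k - 1) choose (n - v)) / real ((n - k - 1) choose (n - u)) >
         ((real q ^ (2 * v - n) - 1) * real (n choose v)) /
         ((real q ^ (2 * u - n) - 1) * real (n choose u))"
  shows "\<not> (\<exists>psi. k_uniform n q k psi)"
proof
  assume "\<exists>psi. k_uniform n q k psi"
  then obtain psi where psi: "k_uniform n q k psi" ..
  have q: "q > 0" using assms(1) by simp
  define X where "X = (real q ^ (2 * v - n) - 1) * real (n choose v)"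
  define Y where "Y = (real q ^ (2 * u - n) - 1) * real (n choose u)"
  let ?\<Sigma> = "\<lambda>m. \<Sum>S | S \<subseteq> {0..<n} \<and> card S = m. scaled_purity n q psi S - 1"
  have exponent: "2 * v - n = n - 2 * k" "2 * k \<le> n" and "n - v = k"
    using assms(2,4) by auto
  have "real ((n - k - 1) choose k) * Y \<le> real ((n - k - 1) choose k) * ?\<Sigma> u"
    using sum_scaled_purity_ge[of n q psi u] psi q assms(3)
    by (intro mult_left_mono) (auto simp: Y_def k_uniform_def mult.commute)
  also have "\<dots> \<le> real ((n - k - 1) choose (n - u)) * ?\<Sigma> v"
    using k_uniform_sum_scaled_purity_le[OF psi q, of u] assms(2-5) by simp
  also have "?\<Sigma> v = X"
    using k_uniform_sum_scaled_purity_n_minus_k[OF psi q exponent(2)] assms(4) exponent(1)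
    by (simp add: X_def mult.commute)
  finally have "real ((n - k - 1) choose k) * Y \<le> real ((n - k - 1) choose (n - u)) * X" .
  moreover have "X / Y < real ((n - k - 1) choose k) / real ((n - k - 1) choose (n - u))"
    using assms(6) by (simp only: X_def Y_def \<open>n - v = k\<close>)
  moreover have "0 < Y"
    using assms(1-3) by (auto simp: Y_def intro!: mult_pos_pos one_less_power)
  moreover have "0 < (n - k - 1) choose (n - u)"
    using assms(2-5) by simp
  ultimately show False
    by (simp add: field_simps)
qed

end
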